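(* Let $F\subseteq D$ be as below and let $F_1,\dots,F_{64}$ be the $64$ cosets of $F$ in $D$; let $L_1,\dots,L_8$ be the $8$ cosets of $L$ contained in $N$ (cosets meaning translates $L+v$, $v\in N$). For any integers $i\in\{0,\dots,64\}$, $j\in\{0,\dots,8\}$ with $0<i+j<72$, the characteristic function of the union of any $i$ of the sets $\Omega(F_1),\dots,\Omega(F_{64})$ and any $j$ of the sets $L_1,\dots,L_8$ is a perfect coloring of $\tfrac12 H^{1}_{24}$ with parameters $((20+3i+8j,\,256-3i-8j)(3i+8j,\,276-3i-8j))$.
   Context: $E^n$: binary words of length $n$, a vector space over $\mathrm{GF}(2)$; $\rho$ is Hamming distance. $\tfrac12 H^{1}_{24}$: the graph on odd-weight words of $E^{24}$, adjacent iff at distance exactly $2$. For $X\subset E^{24}$, $\Omega(X)$ is the set of words at distance exactly $1$ from $X$. $C_8$ (resp. $C_8'$) $\subset E^8$ is the linear span of $11111111$ and the seven words obtained from $00101110$ (resp. $01001110$) by cyclically permuting the first seven coordinates. $B\subset E^8$ is the set of even-weight words. $F=\{(x+y,x+z,x+y+z): x\in C_8, y,z\in C_8'\}$ (the extended Golay code, linear, $2^{12}$ words), $D=\{(x+y,x+z,x+y+z): x\in C_8, y,z\in B\}$ (linear, $2^{18}$ words, $F\subset D$), $L=\{(x,y,y+z): x,y\in B, z\in C_8\}$ (linear, $2^{18}$ words), $N=\{(x+00000001,\,y+00000001,\,z+00000001): x,y,z\in B\}$ ($2^{21}$ odd-weight words, a union of $8$ cosets of $L$). Words of $E^{24}$ are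 concatenations of three words of length $8$. For a set $C$, $\chi_C$ is a perfect coloring with parameters $((a,b)(c,d))$ if every vertex of $C$ has exactly $a$ neighbours in $C$ and $b$ outside, and every vertex outside $C$ has exactly $c$ neighbours in $C$ and $d$ outside. *)

theory Defs
  imports Main
begin

text \<open>Binary words of length n are boolean lists of length n; True stands for 1.
  Addition over GF(2) is componentwise exclusive or.\<close>

definition words :: "nat \<Rightarrow> bool list set" where
  "words n = {w. length w = n}"

definition wadd :: "bool list \<Rightarrow> bool list \<Rightarrow> bool list" where
  "wadd a b = map2 (\<noteq>) a b"

definition wt :: "bool list \<Rightarrow> nat" where
  "wt w = length (filter id w)"

definition hdist :: "bool list \<Rightarrow> bool list \<Rightarrow> nat" where
  "hdist a b = card {i. i < length a \<and> a ! i \<noteq> b ! i}"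

definition bw :: "nat list \<Rightarrow> bool list" where
  "bw xs = map (\<lambda>k. k = 1) xs"

inductive_set gf2_span :: "nat \<Rightarrow> bool list set \<Rightarrow> bool list set" for n S where
  zero: "replicate n False \<in> gf2_span n S"
| add: "s \<in> S \<Longrightarrow> a \<in> gf2_span n S \<Longrightarrow> wadd s a \<in> gf2_span n S"

definition cyc7 :: "nat \<Rightarrow> bool list \<Rightarrow> bool list" where
  "cyc7 k w = map (\<lambda>i. if i < 7 then w ! ((i + k) mod 7) else w ! i) [0..<8]"

definition C8 :: "bool list set" where
  "C8 = gf2_span 8 (insert (bw [1,1,1,1,1,1,1,1])
          ((\<lambda>k. cyc7 k (bw [0,0,1,0,1,1,1,0])) ` {0..<7}))"

definition C8' :: "bool list set" where
  "C8' = gf2_span 8 (insert (bw [1,1,1,1,1,1,1,1])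
          ((\<lambda>k. cyc7 k (bw [0,1,0,0,1,1,1,0])) ` {0..<7}))"

definition Bev :: "bool list set" where
  "Bev = {w \<in> words 8. even (wt w)}"

definition Fgolay :: "bool list set" where
  "Fgolay = {wadd x y @ wadd x z @ wadd (wadd x y) z | x y z. x \<in> C8 \<and> y \<in> C8' \<and> z \<in> C8'}"

definition Dcode :: "bool list set" where
  "Dcode = {wadd x y @ wadd x z @ wadd (wadd x y) z | x y z. x \<in> C8 \<and> y \<in> Bev \<and> z \<in> Bev}"

definition Lcode :: "bool list set" where
  "Lcode = {x @ y @ wadd y z | x y z. x \<in> Bev \<and> y \<in> Bev \<and> z \<in> C8}"

definition e8 :: "bool list" where
  "e8 = bw [0,0,0,0,0,0,0,1]"

definition Nset :: "bool list set" where
  "Nset = {wadd x e8 @ wadd y e8 @ wadd z e8 | x y z. x \<in> Bev \<and> y \<in> Bev \<and> z \<in> Bev}"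

definition transl :: "bool list set \<Rightarrow> bool list \<Rightarrow> bool list set" where
  "transl X v = (\<lambda>x. wadd x v) ` X"

definition F_cosets :: "bool list set set" where
  "F_cosets = transl Fgolay ` Dcode"

definition L_cosets :: "bool list set set" where
  "L_cosets = transl Lcode ` Nset"

definition Omega :: "bool list set \<Rightarrow> bool list set" where
  "Omega X = {w \<in> words 24. \<exists>x\<in>X. hdist w x = 1}"

definition HV :: "bool list set" where
  "HV = {w \<in> words 24. odd (wt w)}"

definition Hadj :: "bool list \<Rightarrow> bool list \<Rightarrow> bool" where
  "Hadj u v = (hdist u v = 2)"

definition perfect_coloring ::
  "'a set \<Rightarrow> ('a \<Rightarrow> 'a \<Rightarrow> bool) \<Rightarrow> 'a set \<Rightarrow> nat \<Rightarrow> nat \<Rightarrow> nat \<Rightarrow> nat \<Rightarrow> bool" where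
  "perfect_coloring V E C a b c d \<longleftrightarrow>
     (\<forall>v\<in>V \<inter> C. card {u\<in>V. E v u \<and> u \<in> C} = a \<and> card {u\<in>V. E v u \<and> u \<notin> C} = b) \<and>
     (\<forall>v\<in>V - C. card {u\<in>V. E v u \<and> u \<in> C} = c \<and> card {u\<in>V. E v u \<and> u \<notin> C} = d)"

end

theory Submission
  imports Defs
begin

(*
  A word of length 24 is identified with its support, a subset of the coordinates {0..<24};
  addition becomes symmetric difference and Hamming distance the size of a symmetric difference.
  The neighbours of an odd word v are the words v + E for the 276 two-element sets E, so every
  count reduces to counting 2-subsets E with v + E in a given set.

  (1) For a coset X = F + d of the Golay code (d in D), v has 23 neighbours in Omega(X) if
      v is in Omega(X) and 3 otherwise.  This only uses that F is a linear code of length 24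
      with 2^12 words, even weights and minimum distance at least 7 (locale golay_like): the
      balls of radius 3 around the codewords then tile the odd words, by a counting argument.
  (2) For a coset Y = L + w inside N, v has 28 neighbours in Y if v is in Y and 8 otherwise.
      Membership in L is given by six parity checks; the number of 2-subsets with a prescribed
      syndrome is tabulated once and for all.
  (3) The sets Omega(F_k) and L_l are pairwise disjoint (they are separated by the minimum
      distance of D and by the parities of the three blocks of length 8).

  Summing over the disjoint pieces gives 3i + 8j + 20 [v in C] neighbours in the union C, and
  together with the degree 276 this is the perfect colouring.  The small codes C8, C8' are
  enumerated from their generators by evaluation, which also yields the weights of F and the
  syndrome table of (2).
*)

lemma wadd_len[simp]: "length (wadd a b) = min (length a) (length b)"
  by (simp add: wadd_def)

lemma wadd_nth[simp]: "i < length a \<Longrightarrow> i < length b \<Longrightarrow> wadd a b ! i = (a ! i \<noteq> b ! i)"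
  by (simp add: wadd_def)

lemma wadd_assoc: "wadd (wadd a b) c = wadd a (wadd b c)"
  by (rule nth_equalityI) auto

lemma wadd_comm: "wadd a b = wadd b a"
  by (rule nth_equalityI) auto

lemma wadd_self[simp]: "wadd a a = replicate (length a) False"
  by (rule nth_equalityI) auto

lemma wadd_zero_left[simp]: "length a = n \<Longrightarrow> wadd (replicate n False) a = a"
  by (rule nth_equalityI) auto

lemma wadd_zero_right[simp]: "length a = n \<Longrightarrow> wadd a (replicate n False) = a"
  by (rule nth_equalityI) auto

lemma wadd_cancel_left: "length a = length b \<Longrightarrow> wadd a (wadd a b) = b"
  by (rule nth_equalityI) auto

lemma wadd_append: "length a = length c \<Longrightarrow> wadd (a @ b) (c @ d) = wadd a c @ wadd b d"
  by (simp add: wadd_def)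

lemma wadd_eq_zero: "length a = length b \<Longrightarrow> wadd a b = replicate (length a) False \<longleftrightarrow> a = b"
  by (auto simp: list_eq_iff_nth_eq)

lemma wadd_interchange:
  "length x = n \<Longrightarrow> length y = n \<Longrightarrow> length x' = n \<Longrightarrow> length y' = n \<Longrightarrow>
   wadd (wadd x y) (wadd x' y') = wadd (wadd x x') (wadd y y')"
  by (rule nth_equalityI) auto

lemma wadd_through:
  "length u = n \<Longrightarrow> length x = n \<Longrightarrow> length y = n \<Longrightarrow> wadd x y = wadd (wadd u x) (wadd u y)"
  by (rule nth_equalityI) auto

lemma wadd_eq_swap:
  assumes "length a = n" "length b = n" "length c = n" "length e = n" "wadd a b = wadd c e"
  shows "wadd b e = wadd a c"
proof -
  have "\<And>i. i < n \<Longrightarrow> (a!i \<noteq> b!i) = (c!i \<noteq> e!i)"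
    using assms by (metis wadd_nth)
  then show ?thesis using assms by (intro nth_equalityI) auto
qed

lemma words_finite: "finite (words n)"
proof -
  have "words n = {xs. set xs \<subseteq> (UNIV::bool set) \<and> length xs = n}" by (auto simp: words_def)
  then show ?thesis using finite_lists_length_eq[OF finite_UNIV, of n] by simp
qed

section \<open>Supports and symmetric differences\<close>

definition symdiff :: "'a set \<Rightarrow> 'a set \<Rightarrow> 'a set" where
  "symdiff A B = (A - B) \<union> (B - A)"

lemma symdiff_mem: "x \<in> symdiff A B \<longleftrightarrow> (x \<in> A \<longleftrightarrow> x \<notin> B)"
  by (auto simp: symdiff_def)

lemma symdiff_comm: "symdiff A B = symdiff B A"
  by (auto simp: symdiff_def)

lemma symdiff_cancel[simp]: "symdiff A (symdiff A B) = B" "symdiff (symdiff B A) A = B"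
  by (auto simp: symdiff_def)

lemma symdiff_self[simp]: "symdiff A A = {}"
  by (auto simp: symdiff_def)

lemma symdiff_eq_empty: "symdiff A B = {} \<longleftrightarrow> A = B"
  by (auto simp: symdiff_def)

lemma symdiff_subset: "A \<subseteq> U \<Longrightarrow> B \<subseteq> U \<Longrightarrow> symdiff A B \<subseteq> U"
  by (auto simp: symdiff_def)

lemma symdiff_finite: "finite A \<Longrightarrow> finite B \<Longrightarrow> finite (symdiff A B)"
  by (auto simp: symdiff_def)

lemma symdiff_swap: "symdiff a b = symdiff c d \<Longrightarrow> symdiff a c = symdiff b d"
  unfolding set_eq_iff symdiff_mem by blast

lemma symdiff_regroup: "symdiff (symdiff (symdiff k A) E) k' = C \<Longrightarrow> symdiff k k' = symdiff (symdiff A E) C"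
  unfolding set_eq_iff symdiff_mem by blast

lemma card_symdiff:
  assumes "finite A" "finite B"
  shows "card (symdiff A B) + 2 * card (A \<inter> B) = card A + card B"
proof -
  have "symdiff A B = (A \<union> B) - (A \<inter> B)" by (auto simp: symdiff_def)
  moreover have "A \<inter> B \<subseteq> A \<union> B" "finite (A \<inter> B)" using assms by auto
  ultimately have "card (symdiff A B) = card (A \<union> B) - card (A \<inter> B)"
    by (simp add: card_Diff_subset)
  moreover have "card (A \<union> B) + card (A \<inter> B) = card A + card B"
    using card_Un_Int[OF assms] by simp
  moreover have "card (A \<inter> B) \<le> card (A \<union> B)" using assms by (intro card_mono) auto
  ultimately show ?thesis by linarith
qed

lemma even_card_symdiff:
  "finite A \<Longrightarrow> finite B \<Longrightarrow> even (card (symdiff A B)) \<longleftrightarrow> (even (card A) \<longleftrightarrow> even (card B))"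
  using card_symdiff[of A B] by (metis dvd_add_left_iff dvd_add_right_iff dvd_triv_left even_add)

lemma card_symdiff_le: "finite A \<Longrightarrow> finite B \<Longrightarrow> card (symdiff A B) \<le> card A + card B"
  using card_symdiff[of A B] by linarith

definition supp :: "bool list \<Rightarrow> nat set" where
  "supp w = {i. i < length w \<and> w ! i}"

definition word_of :: "nat \<Rightarrow> nat set \<Rightarrow> bool list" where
  "word_of n A = map (\<lambda>i. i \<in> A) [0..<n]"

lemma supp_subset: "supp w \<subseteq> {0..<length w}" by (auto simp: supp_def)

lemma supp_finite[simp]: "finite (supp w)" using supp_subset finite_subset by blast

lemma supp_wadd: "length a = length b \<Longrightarrow> supp (wadd a b) = symdiff (supp a) (supp b)"
  by (auto simp: supp_def symdiff_def)

lemma hdist_supp: "length a = length b \<Longrightarrow> hdist a b = card (symdiff (supp a) (supp b))"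
  unfolding hdist_def supp_def symdiff_def by (rule arg_cong[where f=card]) auto

lemma wt_supp: "wt w = card (supp w)"
  unfolding wt_def supp_def by (simp add: length_filter_conv_card)

lemma word_of_len[simp]: "length (word_of n A) = n" by (simp add: word_of_def)

lemma supp_word_of: "A \<subseteq> {0..<n} \<Longrightarrow> supp (word_of n A) = A"
  by (auto simp: word_of_def supp_def)

lemma word_of_supp: "word_of (length w) (supp w) = w"
  by (rule nth_equalityI) (auto simp: word_of_def supp_def)

lemma supp_inj: "length a = length b \<Longrightarrow> supp a = supp b \<Longrightarrow> a = b"
  by (metis word_of_supp)

lemma wt_wadd_le: "length a = length b \<Longrightarrow> wt (wadd a b) \<le> wt a + wt b"
  by (simp add: wt_supp supp_wadd card_symdiff_le)

lemma even_wt_wadd: "length a = length b \<Longrightarrow> even (wt (wadd a b)) \<longleftrightarrow> (even (wt a) \<longleftrightarrow> even (wt b))"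
  by (simp add: wt_supp supp_wadd even_card_symdiff)

lemma wt_append[simp]: "wt (a @ b) = wt a + wt b" by (simp add: wt_def)

lemma wt_zero_iff: "wt a = 0 \<longleftrightarrow> a = replicate (length a) False"
proof -
  have "supp a = {} \<longleftrightarrow> a = replicate (length a) False"
    by (auto simp: supp_def list_eq_iff_nth_eq)
  then show ?thesis by (simp add: wt_supp)
qed

lemma even_wt_cases: "even (wt a) \<Longrightarrow> a = replicate (length a) False \<or> 2 \<le> wt a"
  using wt_zero_iff[of a] by (auto elim!: evenE)

lemma hdist_wt: "length a = length b \<Longrightarrow> hdist a b = wt (wadd a b)"
  by (simp add: hdist_supp wt_supp supp_wadd)

lemma gf2_span_len:
  assumes "\<And>g. g \<in> S \<Longrightarrow> length g = n" "a \<in> gf2_span n S"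
  shows "length a = n"
  using assms(2) by induction (auto simp: assms(1))

lemma gf2_span_mono:
  assumes "S \<subseteq> T"
  shows "gf2_span n S \<subseteq> gf2_span n T"
proof
  fix a assume "a \<in> gf2_span n S"
  then show "a \<in> gf2_span n T" by induction (use assms in \<open>auto intro: gf2_span.intros\<close>)
qed

lemma gf2_span_closed:
  assumes "a \<in> gf2_span n S" "b \<in> gf2_span n S" "\<And>g. g \<in> S \<Longrightarrow> length g = n"
  shows "wadd a b \<in> gf2_span n S"
  using assms(1)
proof (induction a rule: gf2_span.induct)
  case zero
  show ?case using gf2_span_len[OF assms(3) assms(2)] assms(2) by simp
next
  case (add s a)
  then show ?case by (simp add: wadd_assoc gf2_span.add)
qed

fun span_list :: "nat \<Rightarrow> bool list list \<Rightarrow> bool list list" where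
  "span_list n [] = [replicate n False]"
| "span_list n (g # gs) = remdups (span_list n gs @ map (wadd g) (span_list n gs))"

lemma distinct_span_list: "distinct (span_list n gs)"
  by (cases gs) simp_all

lemma span_list_len:
  "(\<And>g. g \<in> set gs \<Longrightarrow> length g = n) \<Longrightarrow> a \<in> set (span_list n gs) \<Longrightarrow> length a = n"
  by (induction gs arbitrary: a) auto

lemma span_list_add:
  assumes "\<And>g. g \<in> set gs \<Longrightarrow> length g = n" "s \<in> set gs" "a \<in> set (span_list n gs)"
  shows "wadd s a \<in> set (span_list n gs)"
  using assms
proof (induction gs arbitrary: a)
  case Nil
  then show ?case by simp
next
  case (Cons g gs)
  have gs_len: "\<And>h. h \<in> set gs \<Longrightarrow> length h = n" using Cons.prems(1) by simp
  have len: "\<And>b. b \<in> set (span_list n gs) \<Longrightarrow> length b = n" by (rule span_list_len[OF gs_len])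
  have lg: "length g = n" "length s = n" using Cons.prems by auto
  from Cons.prems(3) consider "a \<in> set (span_list n gs)" | b where "b \<in> set (span_list n gs)" "a = wadd g b"
    by auto
  then show ?case
  proof cases
    case 1
    then show ?thesis using Cons.IH[OF gs_len] Cons.prems(2) by (cases "s = g") auto
  next
    case 2
    show ?thesis
    proof (cases "s = g")
      case True
      then show ?thesis using 2 len[of b] lg by (simp add: wadd_cancel_left)
    next
      case False
      then have "wadd s b \<in> set (span_list n gs)" using Cons.IH[OF gs_len] Cons.prems(2) 2 by simp
      moreover have "wadd s a = wadd g (wadd s b)" using 2 by (metis wadd_assoc wadd_comm)
      ultimately show ?thesis by auto
    qed
  qed
qed

lemma gf2_span_list:
  assumes "\<And>g. g \<in> set gs \<Longrightarrow> length g = n"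
  shows "gf2_span n (set gs) = set (span_list n gs)"
proof
  show "gf2_span n (set gs) \<subseteq> set (span_list n gs)"
  proof
    fix a assume "a \<in> gf2_span n (set gs)"
    then show "a \<in> set (span_list n gs)"
    proof (induction a rule: gf2_span.induct)
      case zero
      show ?case by (induction gs) auto
    next
      case (add s a)
      then show ?case using span_list_add[OF assms] by blast
    qed
  qed
  show "set (span_list n gs) \<subseteq> gf2_span n (set gs)"
  proof (induction gs)
    case Nil
    then show ?case by (auto intro: gf2_span.zero)
  next
    case (Cons g gs)
    have "gf2_span n (set gs) \<subseteq> gf2_span n (set (g # gs))" by (rule gf2_span_mono) auto
    then show ?case using Cons by (auto intro: gf2_span.add)
  qed
qed

definition C8_gens :: "bool list list" where
  "C8_gens = bw [1,1,1,1,1,1,1,1] # map (\<lambda>k. cyc7 k (bw [0,0,1,0,1,1,1,0])) [0..<7]"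

definition C8'_gens :: "bool list list" where
  "C8'_gens = bw [1,1,1,1,1,1,1,1] # map (\<lambda>k. cyc7 k (bw [0,1,0,0,1,1,1,0])) [0..<7]"

definition C8_words :: "bool list list" where "C8_words = span_list 8 C8_gens"
definition C8'_words :: "bool list list" where "C8'_words = span_list 8 C8'_gens"

lemma C8_eq: "C8 = set C8_words"
proof -
  have gens: "insert (bw [1,1,1,1,1,1,1,1]) ((\<lambda>k. cyc7 k (bw [0,0,1,0,1,1,1,0])) ` {0..<7}) = set C8_gens"
    by (simp add: C8_gens_def)
  show ?thesis unfolding C8_def gens C8_words_def
    by (rule gf2_span_list) (auto simp: C8_gens_def bw_def cyc7_def)
qed

lemma C8'_eq: "C8' = set C8'_words"
proof -
  have gens: "insert (bw [1,1,1,1,1,1,1,1]) ((\<lambda>k. cyc7 k (bw [0,1,0,0,1,1,1,0])) ` {0..<7}) = set C8'_gens"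
    by (simp add: C8'_gens_def)
  show ?thesis unfolding C8'_def gens C8'_words_def
    by (rule gf2_span_list) (auto simp: C8'_gens_def bw_def cyc7_def)
qed

text \<open>C8 is the extended Hamming code: 16 words of even weight, none of weight 2.\<close>
lemma C8_words_props: "list_all (\<lambda>x. length x = 8 \<and> even (wt x) \<and> wt x \<noteq> 2) C8_words"
  unfolding C8_words_def C8_gens_def by code_simp

lemma C8'_words_props: "list_all (\<lambda>x. length x = 8 \<and> even (wt x)) C8'_words"
  unfolding C8'_words_def C8'_gens_def by code_simp

lemma length_C8_words: "length C8_words = 16" "length C8'_words = 16"
  unfolding C8_words_def C8_gens_def C8'_words_def C8'_gens_def by code_simp+

lemma C8_props: "x \<in> C8 \<Longrightarrow> length x = 8 \<and> even (wt x) \<and> wt x \<noteq> 2"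
  using C8_words_props by (auto simp: C8_eq list_all_iff)

lemma C8'_props: "x \<in> C8' \<Longrightarrow> length x = 8 \<and> even (wt x)"
  using C8'_words_props by (auto simp: C8'_eq list_all_iff)

lemma card_C8: "card C8 = 16" "card C8' = 16"
  using length_C8_words distinct_span_list
  by (simp_all add: C8_eq C8'_eq C8_words_def C8'_words_def distinct_card)

lemma C8_closed: assumes "a \<in> C8" "b \<in> C8" shows "wadd a b \<in> C8"
  using assms unfolding C8_def by (rule gf2_span_closed) (auto simp: bw_def cyc7_def)

lemma C8'_closed: assumes "a \<in> C8'" "b \<in> C8'" shows "wadd a b \<in> C8'"
  using assms unfolding C8'_def by (rule gf2_span_closed) (auto simp: bw_def cyc7_def)

lemma Bev_len: "a \<in> Bev \<Longrightarrow> length a = 8" by (simp add: Bev_def words_def)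

lemma Bev_closed: "a \<in> Bev \<Longrightarrow> b \<in> Bev \<Longrightarrow> wadd a b \<in> Bev"
  by (auto simp: Bev_def words_def even_wt_wadd)

lemma C8'_Bev: "C8' \<subseteq> Bev" using C8'_props by (auto simp: Bev_def words_def)

definition band :: "bool list \<Rightarrow> bool list \<Rightarrow> bool list" where "band h u = map2 (\<and>) h u"

definition C8_checks :: "bool list list" where
  "C8_checks = [bw [1,1,1,1,1,1,1,1], bw [0,0,1,0,1,1,1,0], bw [0,1,0,1,1,1,0,0], bw [1,0,1,1,1,0,0,0]]"

lemma C8_checks_len: "h \<in> set C8_checks \<Longrightarrow> length h = 8"
  by (auto simp: C8_checks_def bw_def)

lemma C8_kernel: "length z = 8 \<Longrightarrow> z \<in> C8 \<longleftrightarrow> (\<forall>h\<in>set C8_checks. even (wt (band h z)))"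
proof -
  assume "length z = 8"
  then have "z \<in> set (List.n_lists 8 [True, False])" by (auto simp: set_n_lists)
  moreover have "set C8_words = set (filter (\<lambda>z. list_all (\<lambda>h. even (wt (band h z))) C8_checks)
                                          (List.n_lists 8 [True, False]))"
    unfolding C8_words_def C8_gens_def C8_checks_def by code_simp
  ultimately show ?thesis unfolding C8_eq by (auto simp: list_all_iff)
qed

section \<open>The codes F, D, L and the set N\<close>

definition turyn :: "bool list \<Rightarrow> bool list \<Rightarrow> bool list \<Rightarrow> bool list" where
  "turyn x y z = wadd x y @ wadd x z @ wadd (wadd x y) z"

lemma turyn_len: "length x = 8 \<Longrightarrow> length y = 8 \<Longrightarrow> length z = 8 \<Longrightarrow> length (turyn x y z) = 24"
  by (simp add: turyn_def)

lemma turyn_add: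
  "length x = 8 \<Longrightarrow> length y = 8 \<Longrightarrow> length z = 8 \<Longrightarrow> length x' = 8 \<Longrightarrow> length y' = 8 \<Longrightarrow> length z' = 8 \<Longrightarrow>
   wadd (turyn x y z) (turyn x' y' z') = turyn (wadd x x') (wadd y y') (wadd z z')"
  unfolding turyn_def by (simp add: wadd_append wadd_interchange) (rule nth_equalityI; auto)

lemma turyn_blocks_sum:
  "length x = n \<Longrightarrow> length y = n \<Longrightarrow> length z = n \<Longrightarrow>
   wadd (wadd (wadd x y) (wadd x z)) (wadd (wadd x y) z) = x"
  by (rule nth_equalityI) auto

lemma turyn_inj:
  assumes "length x = 8" "length y = 8" "length z = 8" "length x' = 8" "length y' = 8" "length z' = 8"
    and "turyn x y z = turyn x' y' z'"
  shows "x = x' \<and> y = y' \<and> z = z'"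
proof -
  have b: "wadd x y = wadd x' y'" "wadd x z = wadd x' z'" "wadd (wadd x y) z = wadd (wadd x' y') z'"
    using assms by (auto simp: turyn_def)
  have xx: "x = x'" using turyn_blocks_sum[of x 8 y z] turyn_blocks_sum[of x' 8 y' z'] assms b by simp
  have "wadd x (wadd x y) = y" "wadd x' (wadd x' y') = y'" "wadd x (wadd x z) = z" "wadd x' (wadd x' z') = z'"
    by (rule wadd_cancel_left; simp add: assms)+
  then show ?thesis using b xx by metis
qed

lemma Fgolay_alt: "Fgolay = (\<lambda>(x,y,z). turyn x y z) ` (C8 \<times> C8' \<times> C8')"
  by (auto simp: Fgolay_def turyn_def image_def)

lemma Dcode_alt: "Dcode = (\<lambda>(x,y,z). turyn x y z) ` (C8 \<times> Bev \<times> Bev)"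
  by (auto simp: Dcode_def turyn_def image_def)

lemma F_len: "w \<in> Fgolay \<Longrightarrow> length w = 24"
  using C8_props C8'_props by (auto simp: Fgolay_alt turyn_len)

lemma D_len: "w \<in> Dcode \<Longrightarrow> length w = 24"
  using C8_props by (auto simp: Dcode_alt turyn_len Bev_len)

lemma F_sub_D: "Fgolay \<subseteq> Dcode"
  unfolding Fgolay_alt Dcode_alt using C8'_Bev by (intro image_mono) auto

lemma F_closed: assumes "a \<in> Fgolay" "b \<in> Fgolay" shows "wadd a b \<in> Fgolay"
proof -
  obtain x y z x' y' z' where a: "a = turyn x y z" "x \<in> C8" "y \<in> C8'" "z \<in> C8'"
    and b: "b = turyn x' y' z'" "x' \<in> C8" "y' \<in> C8'" "z' \<in> C8'" using assms unfolding Fgolay_alt by auto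
  have "wadd a b = turyn (wadd x x') (wadd y y') (wadd z z')"
    using a b C8_props C8'_props by (simp add: turyn_add)
  then show ?thesis unfolding Fgolay_alt using a b C8_closed C8'_closed
    by (intro image_eqI[where x="(wadd x x', wadd y y', wadd z z')"]) auto
qed

lemma D_closed: assumes "a \<in> Dcode" "b \<in> Dcode" shows "wadd a b \<in> Dcode"
proof -
  obtain x y z x' y' z' where a: "a = turyn x y z" "x \<in> C8" "y \<in> Bev" "z \<in> Bev"
    and b: "b = turyn x' y' z'" "x' \<in> C8" "y' \<in> Bev" "z' \<in> Bev" using assms unfolding Dcode_alt by auto
  have "wadd a b = turyn (wadd x x') (wadd y y') (wadd z z')"
    using a b C8_props Bev_len by (simp add: turyn_add)
  then show ?thesis unfolding Dcode_alt using a b C8_closed Bev_closed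
    by (intro image_eqI[where x="(wadd x x', wadd y y', wadd z z')"]) auto
qed

lemma F_card: "card Fgolay = 4096"
proof -
  have "inj_on (\<lambda>(x,y,z). turyn x y z) (C8 \<times> C8' \<times> C8')"
  proof (rule inj_onI)
    fix p q assume "p \<in> C8 \<times> C8' \<times> C8'" "q \<in> C8 \<times> C8' \<times> C8'"
      and e: "(\<lambda>(x,y,z). turyn x y z) p = (\<lambda>(x,y,z). turyn x y z) q"
    moreover obtain x y z x' y' z' where "p = (x,y,z)" "q = (x',y',z')" by (cases p, cases q) auto
    ultimately show "p = q" using C8_props C8'_props turyn_inj[of x y z x' y' z'] by auto
  qed
  then have "card Fgolay = card (C8 \<times> C8' \<times> C8')" unfolding Fgolay_alt by (rule card_image)
  then show ?thesis by (simp add: card_cartesian_product card_C8)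
qed

text \<open>F is the extended Golay code: all its nonzero weights are even and at least 8.\<close>
lemma F_wt: assumes "w \<in> Fgolay" shows "even (wt w) \<and> (w = replicate 24 False \<or> 8 \<le> wt w)"
proof -
  have table: "list_all (\<lambda>x. list_all (\<lambda>y. list_all (\<lambda>z. let w = turyn x y z in
                  even (wt w) \<and> (wt w = 0 \<or> 8 \<le> wt w)) C8'_words) C8'_words) C8_words"
    unfolding C8_words_def C8_gens_def C8'_words_def C8'_gens_def by code_simp
  obtain x y z where "x \<in> set C8_words" "y \<in> set C8'_words" "z \<in> set C8'_words" and w: "w = turyn x y z"
    using assms unfolding Fgolay_alt C8_eq C8'_eq by auto
  then have "even (wt w) \<and> (wt w = 0 \<or> 8 \<le> wt w)"
    using table unfolding list_all_iff Let_def w by blast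
  then show ?thesis using wt_zero_iff[of w] F_len[OF assms] by auto
qed

lemma D_small: assumes "d \<in> Dcode" "wt d \<le> 2" shows "d = replicate 24 False"
proof -
  obtain x y z where d: "d = turyn x y z" and xyz: "x \<in> C8" "y \<in> Bev" "z \<in> Bev"
    using assms(1) unfolding Dcode_alt by auto
  have l: "length x = 8" "length y = 8" "length z = 8" using xyz C8_props Bev_len by auto
  have ev: "even (wt x)" "even (wt y)" "even (wt z)" "wt x \<noteq> 2" using xyz C8_props by (auto simp: Bev_def)
  have s: "wt (wadd x y) + wt (wadd x z) + wt (wadd (wadd x y) z) \<le> 2"
    using assms(2) by (simp add: d turyn_def)
  have "wt x \<le> 2"
    using turyn_blocks_sum[of x 8 y z] l s wt_wadd_le[of "wadd (wadd x y) (wadd x z)" "wadd (wadd x y) z"]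
      wt_wadd_le[of "wadd x y" "wadd x z"] by simp
  then have x0: "x = replicate 8 False" using ev even_wt_cases[of x] l by auto
  have s2: "wt y + wt z + wt (wadd y z) \<le> 2" using s l by (simp add: x0)
  have ev2: "even (wt (wadd y z))" using ev l even_wt_wadd by simp
  have y0: "y = replicate 8 False"
  proof (rule ccontr)
    assume "y \<noteq> replicate 8 False"
    then have "2 \<le> wt y" using even_wt_cases[of y] ev l by auto
    then have "wt z = 0" "wt (wadd y z) = 0" using s2 ev ev2 by (auto elim!: evenE)
    then have "z = replicate 8 False" "wadd y z = replicate 8 False" using wt_zero_iff l by auto
    then show False using \<open>y \<noteq> _\<close> l by simp
  qed
  have z0: "z = replicate 8 False"
  proof (rule ccontr)
    assume "z \<noteq> replicate 8 False"
    then have "2 \<le> wt z" using even_wt_cases[of z] ev l by auto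
    then show False using s2 y0 l by simp
  qed
  show ?thesis using x0 y0 z0 by (simp add: d turyn_def eval_nat_numeral)
qed

text \<open>Blocks of length 8 of a word of length 24, and the block parities distinguishing D and L from N.\<close>

definition block1 :: "bool list \<Rightarrow> bool list" where "block1 u = take 8 u"
definition block2 :: "bool list \<Rightarrow> bool list" where "block2 u = take 8 (drop 8 u)"
definition block3 :: "bool list \<Rightarrow> bool list" where "block3 u = drop 16 u"

definition even_blocks :: "bool list \<Rightarrow> bool" where
  "even_blocks u \<longleftrightarrow> length u = 24 \<and> even (wt (block1 u)) \<and> even (wt (block2 u)) \<and> even (wt (block3 u))"

definition odd_blocks :: "bool list \<Rightarrow> bool" where
  "odd_blocks u \<longleftrightarrow> length u = 24 \<and> odd (wt (block1 u)) \<and> odd (wt (block2 u)) \<and> odd (wt (block3 u))"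

lemma block_wadd:
  "block1 (wadd a b) = wadd (block1 a) (block1 b)" "block2 (wadd a b) = wadd (block2 a) (block2 b)"
  "block3 (wadd a b) = wadd (block3 a) (block3 b)"
  by (simp_all add: block1_def block2_def block3_def wadd_def take_map drop_map take_zip drop_zip)

lemma block_append:
  "length a = 8 \<Longrightarrow> length b = 8 \<Longrightarrow> block1 (a@b@c) = a \<and> block2 (a@b@c) = b \<and> block3 (a@b@c) = c"
  by (simp add: block1_def block2_def block3_def)

lemma block_len: "length u = 24 \<Longrightarrow> length (block1 u) = 8 \<and> length (block2 u) = 8 \<and> length (block3 u) = 8"
  by (simp add: block1_def block2_def block3_def)

lemma block_split: "u = block1 u @ block2 u @ block3 u"
  by (simp add: block1_def block2_def block3_def)
    (metis append_take_drop_id drop_drop numeral_Bit0 add.commute)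

lemma even_blocks_add: "even_blocks a \<Longrightarrow> even_blocks b \<Longrightarrow> even_blocks (wadd a b)"
  by (simp add: even_blocks_def block_wadd even_wt_wadd block_len)

lemma odd_blocks_add: "even_blocks a \<Longrightarrow> odd_blocks b \<Longrightarrow> odd_blocks (wadd a b)"
  by (simp add: even_blocks_def odd_blocks_def block_wadd even_wt_wadd block_len)

lemma even_blocks_even: "even_blocks u \<Longrightarrow> even (wt u)"
  unfolding even_blocks_def by (subst block_split) simp

lemma odd_blocks_odd: "odd_blocks u \<Longrightarrow> odd (wt u)"
  unfolding odd_blocks_def by (subst block_split) simp

lemma odd_blocks_wt: assumes "odd_blocks u" shows "3 \<le> wt u"
proof -
  have "1 \<le> wt (block1 u)" "1 \<le> wt (block2 u)" "1 \<le> wt (block3 u)"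
    using assms unfolding odd_blocks_def by (auto simp: odd_pos Suc_le_eq)
  moreover have "wt u = wt (block1 u) + wt (block2 u) + wt (block3 u)"
    by (subst block_split) simp
  ultimately show ?thesis by simp
qed

lemma D_even_blocks: assumes "d \<in> Dcode" shows "even_blocks d"
proof -
  obtain x y z where d: "d = turyn x y z" and xyz: "x \<in> C8" "y \<in> Bev" "z \<in> Bev"
    using assms unfolding Dcode_alt by auto
  have "length x = 8" "length y = 8" "length z = 8" "even (wt x)" "even (wt y)" "even (wt z)"
    using xyz C8_props Bev_len by (auto simp: Bev_def)
  then show ?thesis unfolding even_blocks_def d turyn_def by (simp add: block_append even_wt_wadd)
qed

lemma Lcode_iff: "u \<in> Lcode \<longleftrightarrow> (\<exists>x y z. u = x @ y @ wadd y z \<and> x \<in> Bev \<and> y \<in> Bev \<and> z \<in> C8)"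
  by (auto simp: Lcode_def)

lemma L_even_blocks: assumes "u \<in> Lcode" shows "even_blocks u"
proof -
  obtain x y z where u: "u = x @ y @ wadd y z" and xyz: "x \<in> Bev" "y \<in> Bev" "z \<in> C8"
    using assms unfolding Lcode_iff by auto
  have "length x = 8" "length y = 8" "length z = 8" "even (wt x)" "even (wt y)" "even (wt z)"
    using xyz C8_props Bev_len by (auto simp: Bev_def)
  then show ?thesis unfolding even_blocks_def u by (simp add: block_append even_wt_wadd)
qed

lemma L_len: "u \<in> Lcode \<Longrightarrow> length u = 24" using L_even_blocks even_blocks_def by blast

lemma L_closed: assumes "a \<in> Lcode" "b \<in> Lcode" shows "wadd a b \<in> Lcode"
proof -
  obtain x y z x' y' z' where a: "a = x @ y @ wadd y z" "x \<in> Bev" "y \<in> Bev" "z \<in> C8"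
    and b: "b = x' @ y' @ wadd y' z'" "x' \<in> Bev" "y' \<in> Bev" "z' \<in> C8"
    using assms unfolding Lcode_iff by blast
  have l: "length x = 8" "length y = 8" "length z = 8" "length x' = 8" "length y' = 8" "length z' = 8"
    using a b C8_props Bev_len by auto
  have "wadd a b = wadd x x' @ wadd y y' @ wadd (wadd y y') (wadd z z')"
    using l by (simp add: a b wadd_append wadd_interchange)
  then show ?thesis unfolding Lcode_iff using a b l by (blast intro: Bev_closed C8_closed)
qed

lemma N_odd_blocks: assumes "w \<in> Nset" shows "odd_blocks w"
proof -
  obtain x y z where w: "w = wadd x e8 @ wadd y e8 @ wadd z e8" and xyz: "x \<in> Bev" "y \<in> Bev" "z \<in> Bev"
    using assms unfolding Nset_def by auto
  have "length x = 8" "length y = 8" "length z = 8" "even (wt x)" "even (wt y)" "even (wt z)"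
    using xyz Bev_len by (auto simp: Bev_def)
  moreover have "length e8 = 8" "wt e8 = 1" by (simp_all add: e8_def bw_def wt_def)
  ultimately show ?thesis unfolding odd_blocks_def w by (simp add: block_append even_wt_wadd)
qed

lemma N_len: "w \<in> Nset \<Longrightarrow> length w = 24" using N_odd_blocks odd_blocks_def by blast

definition L_checks :: "bool list list" where
  "L_checks = [replicate 8 True @ replicate 8 False @ replicate 8 False,
               replicate 8 False @ replicate 8 True @ replicate 8 False]
              @ map (\<lambda>h. replicate 8 False @ h @ h) C8_checks"

lemma band_len[simp]: "length (band h u) = min (length h) (length u)" by (simp add: band_def)

lemma band_append: "length h = length a \<Longrightarrow> band (h@h') (a@a') = band h a @ band h' a'"
  by (simp add: band_def)

lemma band_zero: "length a = n \<Longrightarrow> wt (band (replicate n False) a) = 0"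
  by (simp add: wt_def band_def zip_replicate1 filter_empty_conv)

lemma band_ones: "length a = n \<Longrightarrow> band (replicate n True) a = a"
  by (rule nth_equalityI) (auto simp: band_def)

lemma band_wadd: "length h = n \<Longrightarrow> length a = n \<Longrightarrow> length b = n \<Longrightarrow>
   band h (wadd a b) = wadd (band h a) (band h b)"
  by (rule nth_equalityI) (auto simp: band_def)

lemma supp_band: "length h = length u \<Longrightarrow> supp (band h u) = supp h \<inter> supp u"
  by (auto simp: supp_def band_def)

lemma L_char: "u \<in> Lcode \<longleftrightarrow> length u = 24 \<and> (\<forall>h\<in>set L_checks. even (wt (band h u)))"
proof
  assume "u \<in> Lcode"
  then obtain x y z where u: "u = x @ y @ wadd y z" and xyz: "x \<in> Bev" "y \<in> Bev" "z \<in> C8"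
    unfolding Lcode_iff by auto
  have l: "length x = 8" "length y = 8" "length z = 8" using xyz C8_props Bev_len by auto
  have ev: "even (wt x)" "even (wt y)" using xyz by (auto simp: Bev_def)
  have kz: "\<forall>h\<in>set C8_checks. even (wt (band h z))" using C8_kernel l xyz by blast
  have "even (wt (band h u))" if h: "h \<in> set L_checks" for h
  proof -
    consider "h = replicate 8 True @ replicate 8 False @ replicate 8 False"
      | "h = replicate 8 False @ replicate 8 True @ replicate 8 False"
      | g where "g \<in> set C8_checks" "h = replicate 8 False @ g @ g"
      using h unfolding L_checks_def by auto
    then show ?thesis
    proof cases
      case 3
      have lg: "length g = 8" using 3 C8_checks_len by blast
      have "band h u = band (replicate 8 False) x @ band g y @ wadd (band g y) (band g z)"
        using 3 l lg by (simp add: u band_append band_wadd)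
      moreover have "even (wt (band g z))" using kz 3 by blast
      ultimately show ?thesis using l lg by (simp add: band_zero even_wt_wadd)
    qed (use l ev in \<open>simp_all add: u band_append band_ones band_zero\<close>)
  qed
  then show "length u = 24 \<and> (\<forall>h\<in>set L_checks. even (wt (band h u)))" using l u by simp
next
  assume a: "length u = 24 \<and> (\<forall>h\<in>set L_checks. even (wt (band h u)))"
  define x y w where "x = block1 u" "y = block2 u" "w = block3 u"
  have u: "u = x @ y @ w" unfolding x_y_w_def by (rule block_split)
  have l: "length x = 8" "length y = 8" "length w = 8" using block_len a x_y_w_def by auto
  have r: "\<And>h. h \<in> set L_checks \<Longrightarrow> even (wt (band h u))" using a by blast
  have ex: "even (wt x)"
    using r[of "replicate 8 True @ replicate 8 False @ replicate 8 False"] l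
    by (simp add: L_checks_def u band_append band_ones band_zero)
  have ey: "even (wt y)"
    using r[of "replicate 8 False @ replicate 8 True @ replicate 8 False"] l
    by (simp add: L_checks_def u band_append band_ones band_zero)
  define z where "z = wadd y w"
  have "even (wt (band g z))" if g: "g \<in> set C8_checks" for g
  proof -
    have lg: "length g = 8" using g C8_checks_len by blast
    have "even (wt (band (replicate 8 False @ g @ g) u))" using r g by (simp add: L_checks_def)
    then have "even (wt (band g y) + wt (band g w))" using l lg by (simp add: u band_append band_zero)
    then show ?thesis using l lg by (simp add: z_def band_wadd even_wt_wadd)
  qed
  then have "z \<in> C8" using C8_kernel l z_def by simp
  moreover have "w = wadd y z" unfolding z_def using l by (simp add: wadd_cancel_left)
  ultimately show "u \<in> Lcode" unfolding Lcode_iff using u ex ey l by (auto simp: Bev_def words_def)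
qed

definition coords :: "nat set" where "coords = {0..<24}"

lemma finite_coords[simp]: "finite coords" by (simp add: coords_def)
lemma card_coords[simp]: "card coords = 24" by (simp add: coords_def)

lemma finite_coord_set: "A \<subseteq> coords \<Longrightarrow> finite A" using finite_subset finite_coords by blast

lemma supp_coords: "length w = 24 \<Longrightarrow> supp w \<subseteq> coords"
  using supp_subset[of w] by (simp add: coords_def)

lemma supp_word_of_coords: "A \<subseteq> coords \<Longrightarrow> supp (word_of 24 A) = A"
  by (simp add: supp_word_of coords_def)

lemma card_odd_subsets:
  assumes "finite U" "U \<noteq> {}"
  shows "card {A. A \<subseteq> U \<and> odd (card A)} = 2 ^ (card U - 1)"
proof -
  obtain a where a: "a \<in> U" using assms(2) by blast
  let ?O = "{A. A \<subseteq> U \<and> odd (card A)}" and ?E = "{A. A \<subseteq> U \<and> even (card A)}"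
  have fin: "\<And>A. A \<subseteq> U \<Longrightarrow> finite A" using assms(1) finite_subset by blast
  have "bij_betw (\<lambda>A. symdiff A {a}) ?E ?O"
  proof (rule bij_betw_byWitness[where f'="\<lambda>A. symdiff A {a}"])
    show "(\<lambda>A. symdiff A {a}) ` ?E \<subseteq> ?O" "(\<lambda>A. symdiff A {a}) ` ?O \<subseteq> ?E"
      using a fin by (auto simp: even_card_symdiff symdiff_mem)
  qed simp_all
  then have "card ?E = card ?O" by (rule bij_betw_same_card)
  moreover have "card (Pow U) = card ?O + card ?E"
  proof -
    have "Pow U = ?O \<union> ?E" by auto
    moreover have "finite ?O" "finite ?E" using assms(1) by (auto intro: finite_subset[of _ "Pow U"])
    ultimately show ?thesis by (simp add: card_Un_disjoint disjoint_iff)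
  qed
  moreover obtain n where n: "card U = Suc n" using assms card_gt_0_iff gr0_conv_Suc by metis
  ultimately have "card ?O + card ?O = 2 ^ Suc n" using card_Pow[OF assms(1)] by simp
  then show ?thesis using n by simp
qed

lemma card_subsets_1_or_3:
  assumes "finite U"
  shows "card {T. T \<subseteq> U \<and> (card T = 1 \<or> card T = 3)} = card U + (card U choose 3)"
proof -
  have "{T. T \<subseteq> U \<and> (card T = 1 \<or> card T = 3)} = {T. T \<subseteq> U \<and> card T = 1} \<union> {T. T \<subseteq> U \<and> card T = 3}"
    by auto
  moreover have "card ({T. T \<subseteq> U \<and> card T = 1} \<union> {T. T \<subseteq> U \<and> card T = 3}) =
     card {T. T \<subseteq> U \<and> card T = 1} + card {T. T \<subseteq> U \<and> card T = 3}"
    using assms by (intro card_Un_disjoint) (auto intro: finite_subset[of _ "Pow U"])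
  ultimately show ?thesis using n_subsets[OF assms] by simp
qed

lemma choose_24_3: "(24::nat) choose 3 = 2024"
proof -
  have "(24::nat) choose 3 = 24 * (23 choose 2) div 3"
    using binomial_Suc_Suc_eq_times[of 23 2] by simp
  also have "(23::nat) choose 2 = 253" by (simp add: choose_two)
  finally show ?thesis by simp
qed

section \<open>Golay-like codes: counting neighbours in Omega of a coset\<close>

definition at_dist1 :: "nat set set \<Rightarrow> nat set set" where
  "at_dist1 K = {A. \<exists>k\<in>K. card (symdiff A k) = 1}"

text \<open>A linear code of length 24 with 2^12 words, even weights and minimum distance at least 7
  (in support form).  These properties suffice for the balls of radius 3 to tile the odd sets.\<close>
locale golay_like =
  fixes K :: "nat set set"
  assumes code_subset: "\<And>k. k \<in> K \<Longrightarrow> k \<subseteq> coords"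
    and code_closed: "\<And>a b. a \<in> K \<Longrightarrow> b \<in> K \<Longrightarrow> symdiff a b \<in> K"
    and code_min: "\<And>k. k \<in> K \<Longrightarrow> k \<noteq> {} \<Longrightarrow> 7 \<le> card k"
    and code_even: "\<And>k. k \<in> K \<Longrightarrow> even (card k)"
    and code_card: "card K = 4096"
begin

lemma unique_close:
  assumes "k \<in> K" "k' \<in> K" "symdiff k k' = X" "finite X" "card X \<le> 6"
  shows "k = k'"
proof (rule ccontr)
  assume "k \<noteq> k'"
  then have "X \<noteq> {}" using assms(3) symdiff_eq_empty[of k k'] by simp
  moreover have "X \<in> K" using assms(1-3) code_closed by blast
  ultimately show False using code_min assms(5) by fastforce
qed

lemma cover:
  assumes "W \<subseteq> coords" "odd (card W)"
  shows "\<exists>k\<in>K. \<exists>T. T \<subseteq> coords \<and> (card T = 1 \<or> card T = 3) \<and> W = symdiff k T"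
proof -
  let ?P = "{T. T \<subseteq> coords \<and> (card T = 1 \<or> card T = 3)}" and ?O = "{A. A \<subseteq> coords \<and> odd (card A)}"
  let ?f = "\<lambda>(k,T). symdiff k T"
  have inj: "inj_on ?f (K \<times> ?P)"
  proof (rule inj_onI, clarify)
    fix k T k' T' assume a: "k \<in> K" "k' \<in> K" "T \<subseteq> coords" "T' \<subseteq> coords" "card T = 1 \<or> card T = 3"
      "card T' = 1 \<or> card T' = 3" and e: "symdiff k T = symdiff k' T'"
    have f: "finite T" "finite T'" using finite_coord_set a(3,4) by auto
    have "card (symdiff T T') \<le> 6" using card_symdiff_le[OF f] a(5,6) by linarith
    then have kk: "k = k'"
      using unique_close[OF a(1,2) symdiff_swap[OF e] symdiff_finite[OF f]] by blast
    have "T = symdiff k (symdiff k T)" by simp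
    also have "\<dots> = T'" using e kk by simp
    finally show "k = k' \<and> T = T'" using kk by simp
  qed
  have sub: "?f ` (K \<times> ?P) \<subseteq> ?O"
  proof clarify
    fix k T assume a: "k \<in> K" "T \<subseteq> coords" "card T = 1 \<or> card T = 3"
    show "symdiff k T \<subseteq> coords \<and> odd (card (symdiff k T))"
      using a code_subset[of k] code_even[of k] finite_coord_set even_card_symdiff[of k T]
      by (auto simp: symdiff_mem)
  qed
  have "card (?f ` (K \<times> ?P)) = card (K \<times> ?P)" using inj by (rule card_image)
  also have "\<dots> = 2^23"
    using code_card card_subsets_1_or_3[of coords] by (simp add: card_cartesian_product choose_24_3)
  also have "\<dots> = card ?O" using card_odd_subsets[of coords] by (simp add: coords_def)
  finally have "?f ` (K \<times> ?P) = ?O" using card_subset_eq[OF _ sub] by simp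
  then have "W \<in> ?f ` (K \<times> ?P)" using assms by blast
  then show ?thesis by auto
qed

lemma count_in:
  assumes "W \<subseteq> coords" "W \<in> at_dist1 K"
  shows "card {E. E \<subseteq> coords \<and> card E = 2 \<and> symdiff W E \<in> at_dist1 K} = 23"
proof -
  obtain k where k: "k \<in> K" "card (symdiff W k) = 1" using assms(2) unfolding at_dist1_def by blast
  obtain a where a: "symdiff W k = {a}" using k(2) by (rule card_1_singletonE)
  have aU: "a \<in> coords" using a assms(1) code_subset[OF k(1)] unfolding symdiff_def by blast
  have Wk: "W = symdiff k {a}" using a by (metis symdiff_cancel(2) symdiff_comm)
  have eq: "{E. E \<subseteq> coords \<and> card E = 2 \<and> symdiff W E \<in> at_dist1 K} = (\<lambda>b. {a,b}) ` (coords - {a})"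
  proof (rule set_eqI, rule iffI)
    fix E assume "E \<in> {E. E \<subseteq> coords \<and> card E = 2 \<and> symdiff W E \<in> at_dist1 K}"
    then have E: "E \<subseteq> coords" "card E = 2" and "symdiff W E \<in> at_dist1 K" by auto
    then obtain k' where k': "k' \<in> K" "card (symdiff (symdiff W E) k') = 1" unfolding at_dist1_def by blast
    obtain c where c: "symdiff (symdiff W E) k' = {c}" using k'(2) by (rule card_1_singletonE)
    have e1: "symdiff k k' = symdiff (symdiff {a} E) {c}" using c unfolding Wk by (rule symdiff_regroup)
    have fE: "finite E" using E finite_coord_set by blast
    have "card (symdiff {a} E) \<le> 3" using card_symdiff_le[of "{a}" E] fE E by simp
    moreover have "finite (symdiff {a} E)" using fE by (simp add: symdiff_finite)
    ultimately have c6: "card (symdiff (symdiff {a} E) {c}) \<le> 6"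
      using card_symdiff_le[of "symdiff {a} E" "{c}"] by simp
    have "k = k'" by (rule unique_close[OF k(1) k'(1) e1 _ c6]) (simp add: fE symdiff_finite)
    then have "symdiff (symdiff {a} E) {c} = {}" using e1 by simp
    then have "symdiff {a} E = {c}" by (simp add: symdiff_eq_empty)
    then have Ea: "E = symdiff {a} {c}" by (metis symdiff_cancel(1))
    then have "c \<noteq> a" "E = {a, c}" using E(2) by (auto simp: symdiff_def)
    then show "E \<in> (\<lambda>b. {a,b}) ` (coords - {a})" using E(1) by blast
  next
    fix E assume "E \<in> (\<lambda>b. {a,b}) ` (coords - {a})"
    then obtain b where b: "b \<in> coords" "b \<noteq> a" "E = {a,b}" by auto
    have "symdiff W E = symdiff k {b}" unfolding Wk b(3) using b(2) by (auto simp: symdiff_def)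
    then have "symdiff (symdiff W E) k = {b}" by (metis symdiff_cancel(2) symdiff_comm)
    then have "symdiff W E \<in> at_dist1 K"
      unfolding at_dist1_def using k(1) by (intro CollectI bexI[where x=k]) simp_all
    then show "E \<in> {E. E \<subseteq> coords \<and> card E = 2 \<and> symdiff W E \<in> at_dist1 K}" using b aU by auto
  qed
  have "inj_on (\<lambda>b. {a,b}) (coords - {a})" by (rule inj_onI) (auto simp: doubleton_eq_iff)
  then have "card ((\<lambda>b. {a,b}) ` (coords - {a})) = 23" using aU by (simp add: card_image)
  then show ?thesis using eq by simp
qed

lemma count_out:
  assumes "W \<subseteq> coords" "odd (card W)" "W \<notin> at_dist1 K"
  shows "card {E. E \<subseteq> coords \<and> card E = 2 \<and> symdiff W E \<in> at_dist1 K} = 3"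
proof -
  obtain k T where k: "k \<in> K" "T \<subseteq> coords" "card T = 1 \<or> card T = 3" "W = symdiff k T"
    using cover[OF assms(1,2)] by blast
  have "symdiff W k = T" using k(4) by (metis symdiff_cancel(2) symdiff_comm)
  then have T3: "card T = 3" using assms(3) k(1,3) unfolding at_dist1_def by auto
  have fT: "finite T" using k(2) finite_coord_set by blast
  have eq: "{E. E \<subseteq> coords \<and> card E = 2 \<and> symdiff W E \<in> at_dist1 K} = {E. E \<subseteq> T \<and> card E = 2}"
  proof (rule set_eqI, rule iffI)
    fix E assume "E \<in> {E. E \<subseteq> coords \<and> card E = 2 \<and> symdiff W E \<in> at_dist1 K}"
    then have E: "E \<subseteq> coords" "card E = 2" and "symdiff W E \<in> at_dist1 K" by auto
    then obtain k' where k': "k' \<in> K" "card (symdiff (symdiff W E) k') = 1" unfolding at_dist1_def by blast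
    obtain c where c: "symdiff (symdiff W E) k' = {c}" using k'(2) by (rule card_1_singletonE)
    have e1: "symdiff k k' = symdiff (symdiff T E) {c}" using c unfolding k(4) by (rule symdiff_regroup)
    have fE: "finite E" using E finite_coord_set by blast
    have "card (symdiff T E) \<le> 5" using card_symdiff_le[of T E] fE fT E T3 by simp
    moreover have "finite (symdiff T E)" using fE fT by (simp add: symdiff_finite)
    ultimately have c6: "card (symdiff (symdiff T E) {c}) \<le> 6"
      using card_symdiff_le[of "symdiff T E" "{c}"] by simp
    have "k = k'" by (rule unique_close[OF k(1) k'(1) e1 _ c6]) (simp add: fE fT symdiff_finite)
    then have "symdiff (symdiff T E) {c} = {}" using e1 by simp
    then have "symdiff T E = {c}" by (simp add: symdiff_eq_empty)
    then have Ea: "E = symdiff T {c}" by (metis symdiff_cancel(1))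
    have "c \<in> T"
    proof (rule ccontr)
      assume "c \<notin> T"
      then have "E = insert c T" using Ea by (auto simp: symdiff_def)
      then show False using \<open>c \<notin> T\<close> fT T3 E(2) by simp
    qed
    then have "E \<subseteq> T" using Ea by (auto simp: symdiff_def)
    then show "E \<in> {E. E \<subseteq> T \<and> card E = 2}" using E(2) by blast
  next
    fix E assume "E \<in> {E. E \<subseteq> T \<and> card E = 2}"
    then have E: "E \<subseteq> T" "card E = 2" by auto
    have "symdiff W E = symdiff k (T - E)" unfolding k(4) using E(1) by (auto simp: symdiff_def)
    then have "symdiff (symdiff W E) k = T - E" by (metis symdiff_cancel(2) symdiff_comm)
    moreover have "card (T - E) = 1" using E fT T3 by (simp add: card_Diff_subset finite_subset)
    ultimately have "symdiff W E \<in> at_dist1 K"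
      unfolding at_dist1_def using k(1) by (intro CollectI bexI[where x=k]) simp_all
    then show "E \<in> {E. E \<subseteq> coords \<and> card E = 2 \<and> symdiff W E \<in> at_dist1 K}" using E k(2) by blast
  qed
  have "card {E. E \<subseteq> T \<and> card E = 2} = 3" using n_subsets[OF fT, of 2] T3 by (simp add: choose_two)
  then show ?thesis using eq by simp
qed

lemma neighbour_count:
  assumes "W \<subseteq> coords" "odd (card W)"
  shows "card {E. E \<subseteq> coords \<and> card E = 2 \<and> symdiff W E \<in> at_dist1 K} = (if W \<in> at_dist1 K then 23 else 3)"
  using count_in count_out assms by auto

end

definition Fsupp :: "nat set set" where "Fsupp = supp ` Fgolay"

interpretation Fsupp: golay_like Fsupp
proof
  fix k assume "k \<in> Fsupp"
  then obtain f where f: "f \<in> Fgolay" "k = supp f" unfolding Fsupp_def by blast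
  show "k \<subseteq> coords" using f F_len supp_coords by simp
  show "even (card k)" using f F_wt by (simp add: wt_supp[symmetric])
  assume "k \<noteq> {}"
  then have "f \<noteq> replicate 24 False" using f by (auto simp: supp_def)
  then have "8 \<le> wt f" using F_wt[OF f(1)] by blast
  then show "7 \<le> card k" using f(2) by (simp add: wt_supp)
next
  fix a b assume "a \<in> Fsupp" "b \<in> Fsupp"
  then obtain f g where f: "f \<in> Fgolay" "a = supp f" and g: "g \<in> Fgolay" "b = supp g"
    unfolding Fsupp_def by blast
  have "symdiff a b = supp (wadd f g)" using f g F_len by (simp add: supp_wadd)
  then show "symdiff a b \<in> Fsupp" unfolding Fsupp_def using F_closed f g by blast
next
  have "inj_on supp Fgolay" using F_len supp_inj by (metis inj_onI)
  then show "card Fsupp = 4096" unfolding Fsupp_def using F_card by (simp add: card_image)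
qed

section \<open>Syndromes of L: counting neighbours in an L-coset\<close>

text \<open>Supports of the words of L, and the syndrome of a set with respect to the checks of L
  (True meaning an even intersection).\<close>

definition Lsupp :: "nat set set" where
  "Lsupp = {A. A \<subseteq> coords \<and> (\<forall>h\<in>set L_checks. even (card (supp h \<inter> A)))}"

definition syndrome :: "nat set \<Rightarrow> bool list" where
  "syndrome A = map (\<lambda>h. even (card (supp h \<inter> A))) L_checks"

lemma L_checks_len: "h \<in> set L_checks \<Longrightarrow> length h = 24"
  using C8_checks_len by (auto simp: L_checks_def)

lemma length_L_checks: "length L_checks = 6" by (simp add: L_checks_def C8_checks_def)

lemma word_of_in_L: assumes "A \<subseteq> coords" shows "word_of 24 A \<in> Lcode \<longleftrightarrow> A \<in> Lsupp"
proof -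
  have "\<And>h. h \<in> set L_checks \<Longrightarrow> wt (band h (word_of 24 A)) = card (supp h \<inter> A)"
    using L_checks_len assms by (simp add: wt_supp supp_band supp_word_of_coords)
  then show ?thesis unfolding L_char Lsupp_def using assms by auto
qed

lemma symdiff_in_Lsupp:
  assumes "R \<subseteq> coords" "E \<subseteq> coords"
  shows "symdiff R E \<in> Lsupp \<longleftrightarrow> syndrome R = syndrome E"
proof -
  have fR: "finite R" and fE: "finite E" using assms finite_coord_set by auto
  have "\<And>h. supp h \<inter> symdiff R E = symdiff (supp h \<inter> R) (supp h \<inter> E)" by (auto simp: symdiff_def)
  then have "\<And>h. even (card (supp h \<inter> symdiff R E)) \<longleftrightarrow>
                    (even (card (supp h \<inter> R)) \<longleftrightarrow> even (card (supp h \<inter> E)))"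
    using fR fE by (simp add: even_card_symdiff)
  moreover have "symdiff R E \<subseteq> coords" using assms by (rule symdiff_subset)
  ultimately show ?thesis unfolding Lsupp_def syndrome_def map_eq_conv by auto
qed

lemma map_eq_replicate_True: "map f xs = replicate (length xs) True \<longleftrightarrow> (\<forall>x\<in>set xs. f x)"
  by (induction xs) auto

lemma Lsupp_syndrome: assumes "R \<subseteq> coords" shows "R \<in> Lsupp \<longleftrightarrow> syndrome R = replicate 6 True"
proof -
  have "syndrome R = replicate 6 True \<longleftrightarrow> (\<forall>h\<in>set L_checks. even (card (supp h \<inter> R)))"
    using map_eq_replicate_True[of "\<lambda>h. even (card (supp h \<inter> R))" L_checks]
    unfolding syndrome_def length_L_checks .
  then show ?thesis unfolding Lsupp_def using assms by blast
qed

definition pairs :: "(nat \<times> nat) list" where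
  "pairs = filter (\<lambda>(a,b). a < b) (List.product [0..<24] [0..<24])"

definition pair_syndrome :: "nat \<Rightarrow> nat \<Rightarrow> bool list" where
  "pair_syndrome a b = map (\<lambda>h. (h!a) = (h!b)) L_checks"

lemma pairs_set: "set pairs = {(a,b). a < b \<and> b < 24}"
  by (auto simp: pairs_def)

lemma pairs_distinct: "distinct pairs"
  unfolding pairs_def by (simp add: distinct_product)

lemma pair_syndrome_table:
  "list_all (\<lambda>t. length (filter (\<lambda>s. s = t) (map (\<lambda>p. pair_syndrome (fst p) (snd p)) pairs)) =
     (if t = replicate 6 True then 28 else 8)) (filter (\<lambda>t. t!2 = t!0) (List.n_lists 6 [True, False]))"
  unfolding pairs_def pair_syndrome_def L_checks_def C8_checks_def by code_simp

lemma even_card_pair: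
  assumes "a \<noteq> b" "a < length h" "b < length h"
  shows "even (card (supp h \<inter> {a,b})) = (h!a = h!b)"
proof (cases "h!a"; cases "h!b")
  assume "h!a" "h!b" then have "supp h \<inter> {a,b} = {a,b}" using assms by (auto simp: supp_def)
  then show ?thesis using assms \<open>h!a\<close> \<open>h!b\<close> by simp
next
  assume "h!a" "\<not> h!b" then have "supp h \<inter> {a,b} = {a}" using assms by (auto simp: supp_def)
  then show ?thesis using \<open>h!a\<close> \<open>\<not> h!b\<close> by simp
next
  assume "\<not> h!a" "h!b" then have "supp h \<inter> {a,b} = {b}" using assms by (auto simp: supp_def)
  then show ?thesis using \<open>\<not> h!a\<close> \<open>h!b\<close> by simp
next
  assume "\<not> h!a" "\<not> h!b" then have "supp h \<inter> {a,b} = {}" using assms by (auto simp: supp_def)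
  then show ?thesis using \<open>\<not> h!a\<close> \<open>\<not> h!b\<close> by simp
qed

lemma syndrome_pair: "a < b \<Longrightarrow> b < 24 \<Longrightarrow> syndrome {a,b} = pair_syndrome a b"
  unfolding syndrome_def pair_syndrome_def map_eq_conv using L_checks_len even_card_pair by simp

lemma two_subsets_as_pairs:
  "{E. E \<subseteq> coords \<and> card E = 2 \<and> P E} = (\<lambda>p. {fst p, snd p}) ` {p \<in> set pairs. P {fst p, snd p}}"
proof (rule set_eqI, rule iffI)
  fix E assume "E \<in> {E. E \<subseteq> coords \<and> card E = 2 \<and> P E}"
  then have E: "E \<subseteq> coords" "card E = 2" "P E" by auto
  obtain x y where xy: "E = {x,y}" "x < y"
  proof -
    obtain x y where "E = {x,y}" "x \<noteq> y" using E(2) card_2_iff by metis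
    then show thesis using that[of x y] that[of y x] by (metis insert_commute linorder_neqE_nat)
  qed
  then have "y < 24" using E(1) by (auto simp: coords_def)
  then show "E \<in> (\<lambda>p. {fst p, snd p}) ` {p \<in> set pairs. P {fst p, snd p}}"
    using xy E(3) unfolding pairs_set by (intro image_eqI[where x="(x,y)"]) auto
next
  fix E assume "E \<in> (\<lambda>p. {fst p, snd p}) ` {p \<in> set pairs. P {fst p, snd p}}"
  then show "E \<in> {E. E \<subseteq> coords \<and> card E = 2 \<and> P E}" unfolding pairs_set by (auto simp: coords_def)
qed

lemma count_syndrome:
  "card {E. E \<subseteq> coords \<and> card E = 2 \<and> syndrome E = t} =
   length (filter (\<lambda>s. s = t) (map (\<lambda>p. pair_syndrome (fst p) (snd p)) pairs))"
proof -
  have inj: "inj_on (\<lambda>p. {fst p, snd p}) (set pairs)"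
    by (rule inj_onI) (auto simp: pairs_set doubleton_eq_iff prod_eq_iff)
  have "card {E. E \<subseteq> coords \<and> card E = 2 \<and> syndrome E = t} = card {p \<in> set pairs. syndrome {fst p, snd p} = t}"
    unfolding two_subsets_as_pairs by (rule card_image) (rule inj_on_subset[OF inj], auto)
  also have "{p \<in> set pairs. syndrome {fst p, snd p} = t} = set (filter (\<lambda>p. pair_syndrome (fst p) (snd p) = t) pairs)"
    using syndrome_pair by (auto simp: pairs_set)
  also have "card \<dots> = length (filter (\<lambda>p. pair_syndrome (fst p) (snd p) = t) pairs)"
    by (rule distinct_card[OF distinct_filter[OF pairs_distinct]])
  finally show ?thesis by (simp add: filter_map comp_def)
qed

text \<open>Syndrome bits 0 and 2 of a set are the parities of its parts in the first block and in
  the last two blocks (the first check of C8 is all ones); they agree for sets of even size.\<close>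
lemma syndrome_even_set: assumes "R \<subseteq> coords" "even (card R)" shows "syndrome R ! 2 = syndrome R ! 0"
proof -
  have "L_checks ! 0 = replicate 8 True @ replicate 16 False" by code_simp
  then have s0: "syndrome R ! 0 = even (card ({0..<8} \<inter> R))"
    using length_L_checks by (auto simp: syndrome_def supp_def nth_append intro!: arg_cong[where f="\<lambda>A. even (card A)"])
  have "L_checks ! 2 = replicate 8 False @ replicate 16 True" by code_simp
  then have s2: "syndrome R ! 2 = even (card ({8..<24} \<inter> R))"
    using length_L_checks by (auto simp: syndrome_def supp_def nth_append intro!: arg_cong[where f="\<lambda>A. even (card A)"])
  have fR: "finite R" using assms finite_coord_set by blast
  have "R = ({0..<8} \<inter> R) \<union> ({8..<24} \<inter> R)" using assms(1) by (auto simp: coords_def)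
  moreover have "({0..<8} \<inter> R) \<inter> ({8..<24} \<inter> R) = {}" by auto
  moreover have "finite ({0..<8} \<inter> R)" "finite ({8..<24} \<inter> R)" using fR by auto
  ultimately have "card R = card ({0..<8} \<inter> R) + card ({8..<24} \<inter> R)"
    using card_Un_disjoint by metis
  then show ?thesis using s0 s2 assms(2) by auto
qed

lemma L_neighbour_count:
  assumes "R \<subseteq> coords" "even (card R)"
  shows "card {E. E \<subseteq> coords \<and> card E = 2 \<and> symdiff R E \<in> Lsupp} = (if R \<in> Lsupp then 28 else 8)"
proof -
  have "{E. E \<subseteq> coords \<and> card E = 2 \<and> symdiff R E \<in> Lsupp} = {E. E \<subseteq> coords \<and> card E = 2 \<and> syndrome E = syndrome R}"
    using symdiff_in_Lsupp[OF assms(1)] by auto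
  then have c: "card {E. E \<subseteq> coords \<and> card E = 2 \<and> symdiff R E \<in> Lsupp} =
      length (filter (\<lambda>s. s = syndrome R) (map (\<lambda>p. pair_syndrome (fst p) (snd p)) pairs))"
    using count_syndrome by simp
  have "syndrome R \<in> set (filter (\<lambda>t. t!2 = t!0) (List.n_lists 6 [True, False]))"
    using syndrome_even_set[OF assms] by (auto simp: set_n_lists syndrome_def length_L_checks)
  then have "length (filter (\<lambda>s. s = syndrome R) (map (\<lambda>p. pair_syndrome (fst p) (snd p)) pairs)) =
     (if syndrome R = replicate 6 True then 28 else 8)"
    using pair_syndrome_table by (simp add: list_all_iff)
  then show ?thesis using c Lsupp_syndrome[OF assms(1)] by simp
qed

section \<open>Neighbourhoods in the halved cube\<close>

definition nbhd :: "bool list \<Rightarrow> bool list set" where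
  "nbhd v = {u \<in> HV. Hadj v u}"

lemma nbhd_Int: "nbhd v \<inter> C = {u \<in> HV. Hadj v u \<and> u \<in> C}"
  by (auto simp: nbhd_def)

lemma finite_HV: "finite HV" using words_finite[of 24] by (auto simp: HV_def intro: finite_subset)

lemma HV_supp: "v \<in> HV \<Longrightarrow> length v = 24 \<and> odd (card (supp v))"
  by (simp add: HV_def words_def wt_supp)

lemma nbhd_transfer:
  assumes "v \<in> HV"
  shows "card (nbhd v \<inter> Q) = card {E. E \<subseteq> coords \<and> card E = 2 \<and> word_of 24 (symdiff (supp v) E) \<in> Q}"
proof -
  define V where "V = supp v"
  have lv: "length v = 24" and oV: "odd (card V)" using HV_supp[OF assms] V_def by auto
  have VU: "V \<subseteq> coords" using supp_coords[OF lv] V_def by simp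
  let ?A = "{E. E \<subseteq> coords \<and> card E = 2 \<and> word_of 24 (symdiff V E) \<in> Q}"
  let ?g = "\<lambda>E. word_of 24 (symdiff V E)"
  have tg: "\<And>E. E \<subseteq> coords \<Longrightarrow> supp (?g E) = symdiff V E"
    using VU by (simp add: supp_word_of_coords symdiff_subset)
  have inj: "inj_on ?g ?A"
  proof (rule inj_onI)
    fix E E' assume "E \<in> ?A" "E' \<in> ?A" "?g E = ?g E'"
    then have "symdiff V E = symdiff V E'" using tg by (metis (no_types, lifting) mem_Collect_eq)
    then show "E = E'" by (metis symdiff_cancel(1))
  qed
  have "?g ` ?A = nbhd v \<inter> Q"
  proof
    show "?g ` ?A \<subseteq> nbhd v \<inter> Q"
    proof (rule image_subsetI)
      fix E assume "E \<in> ?A"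
      then have E: "E \<subseteq> coords" "card E = 2" "word_of 24 (symdiff V E) \<in> Q" by auto
      have t: "supp (?g E) = symdiff V E" using tg E by blast
      have "odd (wt (?g E))"
        unfolding wt_supp t using even_card_symdiff[of V E] finite_coord_set VU oV E by simp
      moreover have "hdist v (?g E) = 2" using lv E by (simp add: hdist_supp t V_def[symmetric])
      ultimately show "?g E \<in> nbhd v \<inter> Q" using E by (simp add: nbhd_def HV_def words_def Hadj_def)
    qed
    show "nbhd v \<inter> Q \<subseteq> ?g ` ?A"
    proof
      fix u assume u: "u \<in> nbhd v \<inter> Q"
      have lu: "length u = 24" using u HV_supp by (auto simp: nbhd_def)
      define E where "E = symdiff V (supp u)"
      have "E \<subseteq> coords" unfolding E_def using VU supp_coords[OF lu] by (rule symdiff_subset)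
      moreover have "card E = 2" using u lu lv by (simp add: nbhd_def Hadj_def hdist_supp E_def V_def)
      moreover have "?g E = u" unfolding E_def using word_of_supp[of u] lu by simp
      ultimately show "u \<in> ?g ` ?A" using u by (intro image_eqI[where x=E]) auto
    qed
  qed
  then show ?thesis using card_image[OF inj] V_def by simp
qed

lemma card_nbhd: assumes "v \<in> HV" shows "card (nbhd v) = 276"
proof -
  have "card (nbhd v) = card {E. E \<subseteq> coords \<and> card E = 2}"
    using nbhd_transfer[OF assms, of UNIV] by simp
  also have "\<dots> = 276" using n_subsets[OF finite_coords, of 2] by (simp add: choose_two)
  finally show ?thesis .
qed

lemma nbhd_count_shift:
  assumes v: "v \<in> HV" and D: "D \<subseteq> coords"
    and mem: "\<And>A. A \<subseteq> coords \<Longrightarrow> word_of 24 A \<in> Q \<longleftrightarrow> symdiff A D \<in> P"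
  shows "card (nbhd v \<inter> Q) = card {E. E \<subseteq> coords \<and> card E = 2 \<and> symdiff (symdiff (supp v) D) E \<in> P}"
    and "v \<in> Q \<longleftrightarrow> symdiff (supp v) D \<in> P"
proof -
  have VU: "supp v \<subseteq> coords" using HV_supp[OF v] supp_coords by blast
  have "\<And>E. E \<subseteq> coords \<Longrightarrow> word_of 24 (symdiff (supp v) E) \<in> Q \<longleftrightarrow> symdiff (symdiff (supp v) D) E \<in> P"
  proof -
    fix E assume "E \<subseteq> coords"
    then have "symdiff (supp v) E \<subseteq> coords" using VU by (intro symdiff_subset)
    moreover have "symdiff (symdiff (supp v) E) D = symdiff (symdiff (supp v) D) E"
      unfolding set_eq_iff symdiff_mem by blast
    ultimately show "word_of 24 (symdiff (supp v) E) \<in> Q \<longleftrightarrow> symdiff (symdiff (supp v) D) E \<in> P"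
      using mem by simp
  qed
  then have "{E. E \<subseteq> coords \<and> card E = 2 \<and> word_of 24 (symdiff (supp v) E) \<in> Q} =
             {E. E \<subseteq> coords \<and> card E = 2 \<and> symdiff (symdiff (supp v) D) E \<in> P}" by blast
  then show "card (nbhd v \<inter> Q) = card {E. E \<subseteq> coords \<and> card E = 2 \<and> symdiff (symdiff (supp v) D) E \<in> P}"
    using nbhd_transfer[OF v] by simp
  show "v \<in> Q \<longleftrightarrow> symdiff (supp v) D \<in> P" using mem[OF VU] HV_supp[OF v] word_of_supp[of v] by simp
qed

lemma finite_cosets: "finite F_cosets" "finite L_cosets"
proof -
  have "Dcode \<subseteq> words 24" "Nset \<subseteq> words 24" using D_len N_len by (auto simp: words_def)
  then show "finite F_cosets" "finite L_cosets"
    unfolding F_cosets_def L_cosets_def using words_finite finite_subset by (metis finite_imageI)+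
qed

lemma coset_eq:
  assumes "\<And>a b. a \<in> K \<Longrightarrow> b \<in> K \<Longrightarrow> wadd a b \<in> K" "\<And>a. a \<in> K \<Longrightarrow> length a = 24"
    "length d1 = 24" "length d2 = 24" "wadd d1 d2 \<in> K"
  shows "transl K d1 = transl K d2"
proof -
  have "transl K d1 \<subseteq> transl K d2" if c: "wadd d1 d2 \<in> K" "length d1 = 24" "length d2 = 24" for d1 d2
  proof
    fix y assume "y \<in> transl K d1"
    then obtain f where f: "f \<in> K" "y = wadd f d1" unfolding transl_def by blast
    have "y = wadd (wadd f (wadd d1 d2)) d2"
      using f assms(2)[OF f(1)] c by (simp add: wadd_assoc wadd_cancel_left)
    moreover have "wadd f (wadd d1 d2) \<in> K" using assms(1) f c by blast
    ultimately show "y \<in> transl K d2" unfolding transl_def by blast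
  qed
  moreover have "wadd d2 d1 \<in> K" using assms(5) wadd_comm by metis
  ultimately show ?thesis using assms by blast
qed

lemma Omega_F_coset_mem:
  assumes "d \<in> Dcode" "A \<subseteq> coords"
  shows "word_of 24 A \<in> Omega (transl Fgolay d) \<longleftrightarrow> symdiff A (supp d) \<in> at_dist1 Fsupp"
proof -
  have ld: "length d = 24" using D_len assms by blast
  have "\<And>f. f \<in> Fgolay \<Longrightarrow> hdist (word_of 24 A) (wadd f d) = card (symdiff (symdiff A (supp d)) (supp f))"
  proof -
    fix f assume "f \<in> Fgolay"
    then have lf: "length f = 24" using F_len by blast
    have "symdiff A (symdiff (supp f) (supp d)) = symdiff (symdiff A (supp d)) (supp f)"
      unfolding set_eq_iff symdiff_mem by blast
    then show "hdist (word_of 24 A) (wadd f d) = card (symdiff (symdiff A (supp d)) (supp f))"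
      using lf ld assms(2) by (simp add: hdist_supp supp_wadd supp_word_of_coords)
  qed
  then show ?thesis unfolding Omega_def at_dist1_def transl_def Fsupp_def by (auto simp: words_def)
qed

lemma L_coset_mem:
  assumes "w \<in> Nset" "A \<subseteq> coords"
  shows "word_of 24 A \<in> transl Lcode w \<longleftrightarrow> symdiff A (supp w) \<in> Lsupp"
proof -
  have lw: "length w = 24" using N_len assms by blast
  let ?u = "word_of 24 A"
  have "?u \<in> transl Lcode w \<longleftrightarrow> wadd ?u w \<in> Lcode"
  proof
    assume "?u \<in> transl Lcode w"
    then obtain l where l: "l \<in> Lcode" "?u = wadd l w" unfolding transl_def by blast
    have "wadd ?u w = l" using l L_len lw by (simp add: wadd_assoc)
    then show "wadd ?u w \<in> Lcode" using l by simp
  next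
    assume a: "wadd ?u w \<in> Lcode"
    have "wadd (wadd ?u w) w = ?u" using lw by (simp add: wadd_assoc)
    then show "?u \<in> transl Lcode w" unfolding transl_def using a by (metis image_eqI)
  qed
  moreover have sU: "symdiff A (supp w) \<subseteq> coords" using assms(2) supp_coords[OF lw] by (rule symdiff_subset)
  moreover have "wadd ?u w = word_of 24 (symdiff A (supp w))"
    using lw sU assms(2) by (intro supp_inj) (simp_all add: supp_wadd supp_word_of_coords)
  ultimately show ?thesis using word_of_in_L by simp
qed

lemma nbhd_Omega_F_coset:
  assumes "v \<in> HV" "X \<in> F_cosets"
  shows "card (nbhd v \<inter> Omega X) = 3 + (if v \<in> Omega X then 20 else 0)"
proof -
  obtain d where d: "d \<in> Dcode" "X = transl Fgolay d" using assms(2) unfolding F_cosets_def by blast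
  have DU: "supp d \<subseteq> coords" using D_len[OF d(1)] supp_coords by blast
  have "\<And>A. A \<subseteq> coords \<Longrightarrow> word_of 24 A \<in> Omega X \<longleftrightarrow> symdiff A (supp d) \<in> at_dist1 Fsupp"
    using Omega_F_coset_mem[OF d(1)] d(2) by simp
  note shift = nbhd_count_shift[OF assms(1) DU this]
  have eD: "even (card (supp d))" using even_blocks_even[OF D_even_blocks[OF d(1)]] by (simp add: wt_supp)
  have R_sub: "symdiff (supp v) (supp d) \<subseteq> coords"
    using HV_supp[OF assms(1)] supp_coords DU symdiff_subset by blast
  have R_par: "odd (card (symdiff (supp v) (supp d)))"
    using HV_supp[OF assms(1)] eD by (simp add: even_card_symdiff)
  have "card (nbhd v \<inter> Omega X) = (if symdiff (supp v) (supp d) \<in> at_dist1 Fsupp then 23 else 3)"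
    using shift(1) Fsupp.neighbour_count[OF R_sub R_par] by simp
  then show ?thesis using shift(2) by simp
qed

lemma nbhd_L_coset:
  assumes "v \<in> HV" "Y \<in> L_cosets"
  shows "card (nbhd v \<inter> Y) = 8 + (if v \<in> Y then 20 else 0)"
proof -
  obtain w where w: "w \<in> Nset" "Y = transl Lcode w" using assms(2) unfolding L_cosets_def by blast
  have DU: "supp w \<subseteq> coords" using N_len[OF w(1)] supp_coords by blast
  have "\<And>A. A \<subseteq> coords \<Longrightarrow> word_of 24 A \<in> Y \<longleftrightarrow> symdiff A (supp w) \<in> Lsupp"
    using L_coset_mem[OF w(1)] w(2) by simp
  note shift = nbhd_count_shift[OF assms(1) DU this]
  have oD: "odd (card (supp w))" using odd_blocks_odd[OF N_odd_blocks[OF w(1)]] by (simp add: wt_supp)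
  have R_sub: "symdiff (supp v) (supp w) \<subseteq> coords"
    using HV_supp[OF assms(1)] supp_coords DU symdiff_subset by blast
  have R_par: "even (card (symdiff (supp v) (supp w)))"
    using HV_supp[OF assms(1)] oD by (simp add: even_card_symdiff)
  have "card (nbhd v \<inter> Y) = (if symdiff (supp v) (supp w) \<in> Lsupp then 28 else 8)"
    using shift(1) L_neighbour_count[OF R_sub R_par] by simp
  then show ?thesis using shift(2) by simp
qed

text \<open>Disjointness of the pieces: Omega of distinct F-cosets (two words of D within distance 2
  are equal), Omega of an F-coset and an L-coset (block parities), and distinct L-cosets.\<close>

lemma Omega_F_cosets_disjoint:
  assumes "X \<in> F_cosets" "Y \<in> F_cosets" "u \<in> Omega X" "u \<in> Omega Y"
  shows "X = Y"
proof -
  obtain d1 d2 where d: "d1 \<in> Dcode" "X = transl Fgolay d1" "d2 \<in> Dcode" "Y = transl Fgolay d2"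
    using assms(1,2) unfolding F_cosets_def by blast
  obtain f1 where f1: "f1 \<in> Fgolay" "hdist u (wadd f1 d1) = 1" and lu: "length u = 24"
    using assms(3) d(2) unfolding Omega_def transl_def words_def by blast
  obtain f2 where f2: "f2 \<in> Fgolay" "hdist u (wadd f2 d2) = 1"
    using assms(4) d(4) unfolding Omega_def transl_def words_def by blast
  have l: "length f1 = 24" "length f2 = 24" "length d1 = 24" "length d2 = 24"
    using f1 f2 d F_len D_len by auto
  let ?x1 = "wadd f1 d1" and ?x2 = "wadd f2 d2"
  have xD: "?x1 \<in> Dcode" "?x2 \<in> Dcode" using f1 f2 d F_sub_D D_closed by auto
  have "wadd ?x1 ?x2 = wadd (wadd u ?x1) (wadd u ?x2)" using l lu by (intro wadd_through) simp_all
  then have "wt (wadd ?x1 ?x2) \<le> 2"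
    using wt_wadd_le[of "wadd u ?x1" "wadd u ?x2"] f1 f2 l lu by (simp add: hdist_wt)
  then have "wadd ?x1 ?x2 = replicate 24 False" using D_small D_closed[OF xD] by blast
  then have "?x1 = ?x2" using wadd_eq_zero[of ?x1 ?x2] l by simp
  then have "wadd d1 d2 = wadd f1 f2" by (rule wadd_eq_swap[OF l(1) l(3) l(2) l(4)])
  then have "wadd d1 d2 \<in> Fgolay" using F_closed f1 f2 by simp
  then show ?thesis using d coset_eq[of Fgolay d1 d2] F_closed F_len l by blast
qed

lemma L_cosets_disjoint:
  assumes "X \<in> L_cosets" "Y \<in> L_cosets" "u \<in> X" "u \<in> Y"
  shows "X = Y"
proof -
  obtain w1 w2 where w: "w1 \<in> Nset" "X = transl Lcode w1" "w2 \<in> Nset" "Y = transl Lcode w2"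
    using assms(1,2) unfolding L_cosets_def by blast
  obtain l1 where l1: "l1 \<in> Lcode" "u = wadd l1 w1" using assms(3) w(2) unfolding transl_def by blast
  obtain l2 where l2: "l2 \<in> Lcode" "u = wadd l2 w2" using assms(4) w(4) unfolding transl_def by blast
  have l: "length l1 = 24" "length l2 = 24" "length w1 = 24" "length w2 = 24"
    using l1 l2 w L_len N_len by auto
  have "wadd l1 w1 = wadd l2 w2" using l1(2) l2(2) by simp
  then have "wadd w1 w2 = wadd l1 l2" by (rule wadd_eq_swap[OF l(1) l(3) l(2) l(4)])
  then have "wadd w1 w2 \<in> Lcode" using L_closed l1 l2 by simp
  then show ?thesis using w coset_eq[of Lcode w1 w2] L_closed L_len l by blast
qed

lemma Omega_F_coset_L_coset_disjoint:
  assumes "X \<in> F_cosets" "Y \<in> L_cosets" "u \<in> Omega X" "u \<in> Y"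
  shows False
proof -
  obtain d where d: "d \<in> Dcode" "X = transl Fgolay d" using assms(1) unfolding F_cosets_def by blast
  obtain w where w: "w \<in> Nset" "Y = transl Lcode w" using assms(2) unfolding L_cosets_def by blast
  obtain f where f: "f \<in> Fgolay" "hdist u (wadd f d) = 1" and lu: "length u = 24"
    using assms(3) d(2) unfolding Omega_def transl_def words_def by blast
  obtain l where l: "l \<in> Lcode" "u = wadd l w" using assms(4) w(2) unfolding transl_def by blast
  have xD: "wadd f d \<in> Dcode" using f d F_sub_D D_closed by auto
  have "odd_blocks (wadd (wadd l (wadd f d)) w)"
    by (rule odd_blocks_add[OF even_blocks_add[OF L_even_blocks[OF l(1)] D_even_blocks[OF xD]] N_odd_blocks[OF w(1)]])
  moreover have "wadd (wadd l (wadd f d)) w = wadd u (wadd f d)"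
    unfolding l(2) by (simp add: wadd_assoc wadd_comm[of w])
  ultimately have "3 \<le> wt (wadd u (wadd f d))" using odd_blocks_wt by simp
  moreover have "wt (wadd u (wadd f d)) = 1" using f lu D_len[OF xD] by (simp add: hdist_wt)
  ultimately show False by simp
qed

lemma card_Int_UN_disjoint:
  assumes "finite I" "finite N"
    and disj: "\<And>i j u. i \<in> I \<Longrightarrow> j \<in> I \<Longrightarrow> u \<in> X i \<Longrightarrow> u \<in> X j \<Longrightarrow> i = j"
    and count: "\<And>i. i \<in> I \<Longrightarrow> card (N \<inter> X i) = b + (if v \<in> X i then a else 0)"
  shows "card (N \<inter> (\<Union>i\<in>I. X i)) = b * card I + (if v \<in> (\<Union>i\<in>I. X i) then a else 0)"
proof -
  have split: "N \<inter> (\<Union>i\<in>I. X i) = (\<Union>i\<in>I. N \<inter> X i)" by blast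
  have "\<forall>i\<in>I. finite (N \<inter> X i)" using assms(2) by simp
  moreover have "\<forall>i\<in>I. \<forall>j\<in>I. i \<noteq> j \<longrightarrow> (N \<inter> X i) \<inter> (N \<inter> X j) = {}" using disj by blast
  ultimately have "card (\<Union>i\<in>I. N \<inter> X i) = (\<Sum>i\<in>I. card (N \<inter> X i))"
    by (rule card_UN_disjoint[OF assms(1)])
  also have "\<dots> = (\<Sum>i\<in>I. b + (if v \<in> X i then a else 0))" using count by simp
  also have "\<dots> = b * card I + a * card {i \<in> I. v \<in> X i}"
    using assms(1) by (simp add: sum.distrib sum.inter_filter[symmetric] mult.commute)
  also have "card {i \<in> I. v \<in> X i} = (if v \<in> (\<Union>i\<in>I. X i) then 1 else 0)"
  proof (cases "v \<in> (\<Union>i\<in>I. X i)")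
    case True
    then obtain i0 where "i0 \<in> I" "v \<in> X i0" by blast
    then have "{i \<in> I. v \<in> X i} = {i0}" using disj by blast
    then show ?thesis using True by simp
  next
    case False
    then have "{i \<in> I. v \<in> X i} = {}" by blast
    then have "card {i \<in> I. v \<in> X i} = 0" by (simp only: card.empty)
    then show ?thesis using False by simp
  qed
  finally show ?thesis unfolding split by simp
qed

lemma nbhd_colour_count:
  assumes v: "v \<in> HV" and S: "S \<subseteq> F_cosets" "finite S" and T: "T \<subseteq> L_cosets" "finite T"
  defines "C \<equiv> (\<Union>X\<in>S. Omega X) \<union> \<Union>T"
  shows "card (nbhd v \<inter> C) = 3 * card S + 8 * card T + (if v \<in> C then 20 else 0)"
proof -
  have finN: "finite (nbhd v)" using finite_HV by (simp add: nbhd_def)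
  have cS: "card (nbhd v \<inter> (\<Union>X\<in>S. Omega X)) = 3 * card S + (if v \<in> (\<Union>X\<in>S. Omega X) then 20 else 0)"
    by (rule card_Int_UN_disjoint[OF S(2) finN])
      (use S(1) Omega_F_cosets_disjoint nbhd_Omega_F_coset[OF v] in blast)+
  have cT: "card (nbhd v \<inter> (\<Union>Y\<in>T. Y)) = 8 * card T + (if v \<in> (\<Union>Y\<in>T. Y) then 20 else 0)"
    by (rule card_Int_UN_disjoint[OF T(2) finN])
      (use T(1) L_cosets_disjoint nbhd_L_coset[OF v] in blast)+
  have disj: "(\<Union>X\<in>S. Omega X) \<inter> \<Union>T = {}"
    using S(1) T(1) Omega_F_coset_L_coset_disjoint by blast
  have "card (nbhd v \<inter> C) = card (nbhd v \<inter> (\<Union>X\<in>S. Omega X)) + card (nbhd v \<inter> \<Union>T)"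
    unfolding C_def Int_Un_distrib by (rule card_Un_disjoint) (use finN disj in auto)
  then show ?thesis using cS cT disj unfolding C_def by auto
qed

lemma perfect_coloring_by_counts:
  assumes "finite V"
    and deg: "\<And>v. v \<in> V \<Longrightarrow> card {u \<in> V. E v u} = r"
    and count: "\<And>v. v \<in> V \<Longrightarrow> card {u \<in> V. E v u \<and> u \<in> C} = m + (if v \<in> C then a else 0)"
  shows "perfect_coloring V E C (m + a) (r - (m + a)) m (r - m)"
proof -
  have out: "card {u \<in> V. E v u \<and> u \<notin> C} = r - card {u \<in> V. E v u \<and> u \<in> C}" if "v \<in> V" for v
  proof -
    have "{u \<in> V. E v u \<and> u \<notin> C} = {u \<in> V. E v u} - {u \<in> V. E v u \<and> u \<in> C}" by blast
    moreover have "finite {u \<in> V. E v u \<and> u \<in> C}" using assms(1) by simp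
    ultimately show ?thesis using deg[OF that] by (simp add: card_Diff_subset subset_iff)
  qed
  show ?thesis unfolding perfect_coloring_def using count out by auto
qed

theorem lemma6:
  fixes i j :: nat and S T :: "bool list set set"
  assumes "i \<le> 64" and "j \<le> 8" and "0 < i + j" and "i + j < 72"
    and "S \<subseteq> F_cosets" and "card S = i"
    and "T \<subseteq> L_cosets" and "card T = j"
  shows "perfect_coloring HV Hadj ((\<Union>X\<in>S. Omega X) \<union> \<Union>T)
           (20 + 3*i + 8*j) (256 - 3*i - 8*j) (3*i + 8*j) (276 - 3*i - 8*j)"
proof -
  let ?C = "(\<Union>X\<in>S. Omega X) \<union> \<Union>T"
  have "finite S" "finite T" using assms(5,7) finite_cosets finite_subset by auto
  have "perfect_coloring HV Hadj ?C (3*i + 8*j + 20) (276 - (3*i + 8*j + 20)) (3*i + 8*j) (276 - (3*i + 8*j))"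
  proof (rule perfect_coloring_by_counts[OF finite_HV])
    show "card {u \<in> HV. Hadj v u} = 276" if "v \<in> HV" for v
      using card_nbhd[OF that] by (simp add: nbhd_def)
    show "card {u \<in> HV. Hadj v u \<and> u \<in> ?C} = 3*i + 8*j + (if v \<in> ?C then 20 else 0)" if "v \<in> HV" for v
      using nbhd_colour_count[OF that assms(5) \<open>finite S\<close> assms(7) \<open>finite T\<close>] assms(6,8)
      by (simp add: nbhd_Int)
  qed
  moreover have "20 + 3*i + 8*j = 3*i + 8*j + 20" "256 - 3*i - 8*j = 276 - (3*i + 8*j + 20)"
    "276 - 3*i - 8*j = 276 - (3*i + 8*j)" by arith+
  ultimately show ?thesis by (simp only:)
qed

end
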